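(* Let $d \geq 3$ and $1 \leq r < \frac d2$ be integers and $|q|<1$. Let $f_{d,r}(x;q) := \sum_{\lambda} x^{\ell(\lambda)} q^{|\lambda|}$, where the sum runs over all partitions $\lambda$ (including the empty one) such that every part is congruent to $0, \pm r \pmod d$, consecutive parts satisfy $\lambda_i - \lambda_{i+1} \geq d$, and $\lambda_i - \lambda_{i+1} > d$ whenever $d \mid \lambda_i$; $\ell(\lambda)$ is the number of parts and $|\lambda|$ their sum. Then \[ f_{d,r}(x;q) = \left(x;q^d\right)_\infty \sum_{n \geq 0} x^n \frac{\left(-q^r, -q^{d-r}; q^d\right)_n}{\left(q^d;q^d\right)_n}. \]
   Context: For $n \in \mathbb{N}_0 \cup \{\infty\}$, $(a;q)_n := \prod_{j=0}^{n-1}(1-aq^j)$ and $(a_1,\dots,a_s;q)_n := (a_1;q)_n\cdots(a_s;q)_n$. *)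

theory Defs
  imports "HOL-Analysis.Analysis"
begin

definition qpoch :: "complex \<Rightarrow> complex \<Rightarrow> nat \<Rightarrow> complex" where
  "qpoch a q n = (\<Prod>j<n. 1 - a * q ^ j)"

definition qpoch_inf :: "complex \<Rightarrow> complex \<Rightarrow> complex" where
  "qpoch_inf a q = (\<Prod>j. 1 - a * q ^ j)"

text \<open>Partitions are lists of parts in weakly decreasing order (here in fact strictly
  decreasing by the gap condition).\<close>
definition drr_partitions :: "nat \<Rightarrow> nat \<Rightarrow> nat list set" where
  "drr_partitions d r = {l.
     (\<forall>p\<in>set l. 0 < p \<and> (p mod d = 0 \<or> p mod d = r mod d \<or> p mod d = (d - r) mod d)) \<and>
     (\<forall>i. Suc i < length l \<longrightarrow>
        l ! (Suc i) + d \<le> l ! i \<and> (d dvd l ! i \<longrightarrow> l ! (Suc i) + d < l ! i))}"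

end

theory Submission
  imports Defs
begin

(* The generating function F(x) = f_{d,r}(x;q) is taken over partitions listed in increasing
   order. Classifying them by their smallest part p (none, p > d, p = r, p = d - r or p = d),
   removing p and subtracting d (or 2d if p = d) from the remaining parts gives the
   q-difference equation
     F(x) = (1 + x q^r + x q^(d-r)) F(x q^d) + x q^d (1 - x q^d) F(x q^(2d)).
   With Q = q^d, a = -q^r and b = -q^(d-r), the right-hand side H(x) = (x;Q)_inf phi(x) of the
   identity, where phi is the series with coefficients (a;Q)_n (b;Q)_n / (Q;Q)_n, satisfies the
   same equation: the coefficients of phi obey a first-order recurrence and
   (x;Q)_inf = (1 - x) (xQ;Q)_inf. Both F and H are continuous at 0 with value 1, and a solution
   of such an equation that is continuous at 0 and vanishes there vanishes on the unit disc:
   iterating the equation pushes the argument into any neighbourhood of 0 at the cost of the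
   factors 1 + C |x| |Q|^k, whose product stays bounded. *)

section \<open>Partitions with difference conditions\<close>

definition drr_part :: "nat \<Rightarrow> nat \<Rightarrow> nat \<Rightarrow> bool" where
  "drr_part d r p \<longleftrightarrow> 0 < p \<and> (p mod d = 0 \<or> p mod d = r mod d \<or> p mod d = (d - r) mod d)"

definition drr_gap :: "nat \<Rightarrow> nat \<Rightarrow> nat \<Rightarrow> bool" where
  "drr_gap d a b \<longleftrightarrow> a + d \<le> b \<and> (d dvd b \<longrightarrow> a + d < b)"

(* Parts in increasing order (drr_partitions lists them decreasingly), so that the smallest part
   is the head. *)
definition drr_lists :: "nat \<Rightarrow> nat \<Rightarrow> nat list set" where
  "drr_lists d r = {l. (\<forall>p\<in>set l. drr_part d r p) \<and> sorted_wrt (drr_gap d) l}"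

lemma drr_lists_Cons:
  "p # l \<in> drr_lists d r \<longleftrightarrow> drr_part d r p \<and> (\<forall>y\<in>set l. drr_gap d p y) \<and> l \<in> drr_lists d r"
  unfolding drr_lists_def by auto

lemma drr_lists_subset_strict_sorted:
  assumes "0 < d" shows "drr_lists d r \<subseteq> {l. sorted_wrt (<) l}"
proof
  fix l assume "l \<in> drr_lists d r"
  then have "sorted_wrt (drr_gap d) l" by (simp add: drr_lists_def)
  then show "l \<in> {l. sorted_wrt (<) l}"
    unfolding mem_Collect_eq by (rule sorted_wrt_mono_rel[rotated]) (use assms in \<open>auto simp: drr_gap_def\<close>)
qed

lemma drr_partitions_eq_rev:
  assumes "0 < d" shows "drr_partitions d r = rev ` drr_lists d r"
proof -
  have "transp (\<lambda>a b. drr_gap d b a)"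
    using assms by (auto simp: transp_def drr_gap_def)
  then have "sorted_wrt (drr_gap d) (rev l) \<longleftrightarrow>
      (\<forall>i. Suc i < length l \<longrightarrow> drr_gap d (l ! Suc i) (l ! i))" for l
    by (simp add: sorted_wrt_rev sorted_wrt_iff_nth_Suc_transp)
  then have "l \<in> drr_partitions d r \<longleftrightarrow> rev l \<in> drr_lists d r" for l
    by (simp add: drr_partitions_def drr_lists_def drr_part_def drr_gap_def)
  then show ?thesis
    by (intro set_eqI) (metis image_iff rev_rev_ident)
qed

lemma drr_gap_add_mult: "drr_gap d (a + d * k) (b + d * k) \<longleftrightarrow> drr_gap d a b"
  by (auto simp: drr_gap_def dvd_add_left_iff)

lemma map_add_mult_in_drr_lists_iff:
  assumes "\<forall>p\<in>set l. 0 < p"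
  shows "map (\<lambda>p. p + d * k) l \<in> drr_lists d r \<longleftrightarrow> l \<in> drr_lists d r"
  using assms by (auto simp: drr_lists_def drr_part_def sorted_wrt_map drr_gap_add_mult)

lemma drr_lists_above_eq_image:
  "{l \<in> drr_lists d r. \<forall>p\<in>set l. d * k < p} = map (\<lambda>p. p + d * k) ` drr_lists d r"
proof (intro set_eqI iffI)
  fix l assume l: "l \<in> {l \<in> drr_lists d r. \<forall>p\<in>set l. d * k < p}"
  define l' where "l' = map (\<lambda>p. p - d * k) l"
  have "l = map (\<lambda>p. p + d * k) l'"
    using l unfolding l'_def by (auto intro!: map_idI[symmetric])
  moreover have "\<forall>p\<in>set l'. 0 < p" using l unfolding l'_def by auto
  ultimately have "l' \<in> drr_lists d r"
    using l map_add_mult_in_drr_lists_iff[of l' d k r] by simp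
  then show "l \<in> map (\<lambda>p. p + d * k) ` drr_lists d r"
    using \<open>l = map (\<lambda>p. p + d * k) l'\<close> by blast
next
  fix l assume "l \<in> map (\<lambda>p. p + d * k) ` drr_lists d r"
  then obtain l' where "l = map (\<lambda>p. p + d * k) l'" "l' \<in> drr_lists d r" by blast
  moreover have "\<forall>p\<in>set l'. 0 < p" using \<open>l' \<in> drr_lists d r\<close> by (auto simp: drr_lists_def drr_part_def)
  ultimately show "l \<in> {l \<in> drr_lists d r. \<forall>p\<in>set l. d * k < p}"
    using map_add_mult_in_drr_lists_iff by auto
qed

lemma drr_lists_hd_eq_image:
  "{m \<in> drr_lists d r. m \<noteq> [] \<and> hd m = c} =
     (#) c ` {l \<in> drr_lists d r. drr_part d r c \<and> (\<forall>y\<in>set l. drr_gap d c y)}"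
  by (auto simp: drr_lists_Cons neq_Nil_conv)

lemma drr_gap_self: "drr_gap d d y \<longleftrightarrow> d * 2 < y"
  by (cases "y = d * 2") (auto simp: drr_gap_def)

lemma add_mod_le_of_le:
  fixes d y :: nat assumes "d \<le> y" shows "d + y mod d \<le> y"
proof -
  have "y mod d = (y - d) mod d" using assms by (rule le_mod_geq)
  also have "\<dots> \<le> y - d" by (rule mod_less_eq_dividend)
  finally show ?thesis using assms by linarith
qed

lemma double_le_of_dvd:
  fixes d y :: nat assumes "d dvd y" "d < y" shows "2 * d \<le> y"
proof -
  obtain k where k: "y = d * k" using assms(1) by (rule dvdE)
  then have "k \<noteq> 0" "k \<noteq> 1" using assms(2) by auto
  then have "d * 2 \<le> d * k" by (intro mult_le_mono2) linarith
  then show ?thesis using k by (simp add: mult.commute)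
qed

locale drr_params =
  fixes d r :: nat
  assumes r_pos: "1 \<le> r" and r_small: "2 * r < d"
begin

lemma drr_part_iff:
  "drr_part d r p \<longleftrightarrow> 0 < p \<and> (p mod d = 0 \<or> p mod d = r \<or> p mod d = d - r)"
proof -
  have "r mod d = r" "(d - r) mod d = d - r" using r_pos r_small by auto
  then show ?thesis by (simp add: drr_part_def)
qed

lemma drr_part_r: "drr_part d r r" and drr_part_d_minus_r: "drr_part d r (d - r)"
  and drr_part_d: "drr_part d r d"
  using r_pos r_small by (auto simp: drr_part_iff)

lemma drr_part_cases:
  assumes "drr_part d r p" shows "p = r \<or> p = d - r \<or> p = d \<or> d < p"
  using assms r_small by (cases "p < d") (auto simp: drr_part_iff)

lemma drr_gap_r_iff:
  assumes "drr_part d r y" shows "drr_gap d r y \<longleftrightarrow> d < y"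
proof -
  have "y mod d = 0 \<or> r \<le> y mod d" using assms r_small by (auto simp: drr_part_iff)
  then show ?thesis
    using add_mod_le_of_le[of d y] double_le_of_dvd[of d y] r_small
    by (auto simp: drr_gap_def dvd_eq_mod_eq_0)
qed

lemma drr_gap_d_minus_r_iff:
  assumes "drr_part d r y" shows "drr_gap d (d - r) y \<longleftrightarrow> d < y \<and> y \<noteq> d + r"
proof (cases "y < 2 * d")
  case True
  then have "d < y \<Longrightarrow> y mod d = y - d" by (simp add: le_mod_geq)
  then show ?thesis using True assms r_small by (auto simp: drr_gap_def drr_part_iff dvd_eq_mod_eq_0)
next
  case False
  then show ?thesis using r_pos r_small by (auto simp: drr_gap_def)
qed

abbreviation L where "L \<equiv> drr_lists d r"

lemma drr_lists_hd_r_eq_image: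
  "{m \<in> L. m \<noteq> [] \<and> hd m = r} = (\<lambda>l. r # map (\<lambda>p. p + d) l) ` L"
proof -
  have "{l \<in> L. drr_part d r r \<and> (\<forall>y\<in>set l. drr_gap d r y)} = {l \<in> L. \<forall>y\<in>set l. d < y}"
    using drr_gap_r_iff drr_part_r by (auto simp: drr_lists_def)
  also have "\<dots> = map (\<lambda>p. p + d) ` L"
    using drr_lists_above_eq_image[of d r 1] by simp
  finally show ?thesis by (simp add: drr_lists_hd_eq_image image_image)
qed

lemma drr_lists_hd_d_minus_r_eq_image:
  "{m \<in> L. m \<noteq> [] \<and> hd m = d - r} = (\<lambda>l. (d - r) # map (\<lambda>p. p + d) l) ` {l \<in> L. r \<notin> set l}"
proof -
  have "{l \<in> L. drr_part d r (d - r) \<and> (\<forall>y\<in>set l. drr_gap d (d - r) y)} =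
      {l \<in> {l \<in> L. \<forall>y\<in>set l. d < y}. d + r \<notin> set l}"
    using drr_gap_d_minus_r_iff drr_part_d_minus_r by (auto simp: drr_lists_def)
  also have "\<dots> = map (\<lambda>p. p + d) ` {l \<in> L. r \<notin> set l}"
    unfolding drr_lists_above_eq_image[of d r 1, simplified] by (auto simp: add.commute)
  finally show ?thesis by (simp add: drr_lists_hd_eq_image image_image)
qed

lemma drr_lists_hd_d_eq_image:
  "{m \<in> L. m \<noteq> [] \<and> hd m = d} = (\<lambda>l. d # map (\<lambda>p. p + d * 2) l) ` L"
proof -
  have "{l \<in> L. drr_part d r d \<and> (\<forall>y\<in>set l. drr_gap d d y)} = map (\<lambda>p. p + d * 2) ` L"
    unfolding drr_gap_self drr_lists_above_eq_image[symmetric] using drr_part_d by simp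
  then show ?thesis by (simp add: drr_lists_hd_eq_image image_image)
qed

lemma drr_lists_above_d_eq_image:
  "{m \<in> L. m \<noteq> [] \<and> (\<forall>y\<in>set m. d < y)} = map (\<lambda>p. p + d) ` (L - {[]})"
  using drr_lists_above_eq_image[of d r 1] by auto

lemma r_in_set_drr_lists_iff:
  assumes "l \<in> L" shows "r \<in> set l \<longleftrightarrow> l \<noteq> [] \<and> hd l = r"
  using assms r_small by (cases l) (auto simp: drr_lists_Cons drr_gap_def)

lemma drr_lists_split:
  "L = {[]} \<union> {m \<in> L. m \<noteq> [] \<and> (\<forall>y\<in>set m. d < y)} \<union> {m \<in> L. m \<noteq> [] \<and> hd m = r}
     \<union> {m \<in> L. m \<noteq> [] \<and> hd m = d - r} \<union> {m \<in> L. m \<noteq> [] \<and> hd m = d}"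
proof -
  have "m \<in> L \<Longrightarrow> m \<noteq> [] \<Longrightarrow> hd m \<in> {r, d - r, d} \<or> (\<forall>y\<in>set m. d < y)" for m
    using drr_part_cases by (cases m) (fastforce simp: drr_lists_Cons drr_gap_def)+
  then show ?thesis by (auto simp: drr_lists_def)
qed

end

definition weight :: "complex \<Rightarrow> complex \<Rightarrow> nat list \<Rightarrow> complex" where
  "weight x q l = x ^ length l * q ^ sum_list l"

lemma weight_Nil [simp]: "weight x q [] = 1"
  by (simp add: weight_def)

lemma weight_Cons: "weight x q (c # l) = x * q ^ c * weight x q l"
  by (simp add: weight_def power_add mult_ac)

lemma weight_map_add: "weight x q (map (\<lambda>p. p + c) l) = weight (x * q ^ c) q l"
proof -
  have "sum_list (map (\<lambda>p. p + c) l) = sum_list l + c * length l"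
    by (induction l) auto
  then show ?thesis
    by (simp add: weight_def power_add power_mult power_mult_distrib mult_ac)
qed

lemma norm_weight_le: "norm x \<le> 1 \<Longrightarrow> norm (weight x q l) \<le> norm q ^ sum_list l"
  by (simp add: weight_def norm_mult norm_power mult_left_le_one_le power_le_one)

lemma summable_on_strict_sorted:
  fixes t :: real
  assumes "0 \<le> t" "t < 1"
  shows "(\<lambda>l. t ^ sum_list l) summable_on {l :: nat list. sorted_wrt (<) l}"
proof (rule nonneg_bdd_above_summable_on)
  show "0 \<le> t ^ sum_list l" for l using assms by simp
  show "bdd_above (sum (\<lambda>l. t ^ sum_list l) ` {F. F \<subseteq> {l. sorted_wrt (<) l} \<and> finite F})"
  proof (rule bdd_aboveI2)
    fix F assume F: "F \<in> {F. F \<subseteq> {l :: nat list. sorted_wrt (<) l} \<and> finite F}"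
    define U where "U = \<Union>(set ` F)"
    have "finite U" using F unfolding U_def by auto
    have sorted: "sorted l" "distinct l" if "l \<in> F" for l
      using F that by (auto simp: strict_sorted_iff)
    have "inj_on set F"
    proof (rule inj_onI)
      fix a b assume "a \<in> F" "b \<in> F" "set a = set b"
      then show "a = b" using sorted sorted_distinct_set_unique by metis
    qed
    have "t ^ sum_list l = (\<Prod>k\<in>set l. t ^ k)" if "l \<in> F" for l
    proof -
      have "sum_list l = (\<Sum>k\<in>set l. k)"
        using sum_list_distinct_conv_sum_set[OF sorted(2)[OF that], of "\<lambda>x. x"] by simp
      then show ?thesis by (simp add: power_sum)
    qed
    then have "sum (\<lambda>l. t ^ sum_list l) F = sum (\<lambda>l. \<Prod>k\<in>set l. t ^ k) F"
      by (rule sum.cong[OF refl])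
    also have "\<dots> = sum (\<lambda>A. \<Prod>k\<in>A. t ^ k) (set ` F)"
      using sum.reindex[OF \<open>inj_on set F\<close>, of "\<lambda>A. \<Prod>k\<in>A. t ^ k"] by simp
    also have "\<dots> \<le> sum (\<lambda>A. \<Prod>k\<in>A. t ^ k) (Pow U)"
      using \<open>finite U\<close> assms by (intro sum_mono2) (auto simp: U_def intro!: prod_nonneg)
    also have "\<dots> = (\<Prod>k\<in>U. t ^ k + 1)"
      using prod_add[OF \<open>finite U\<close>, of "\<lambda>k. t ^ k" "\<lambda>_. 1"] by simp
    also have "\<dots> \<le> exp (\<Sum>k\<in>U. t ^ k)"
      using prod_le_exp_sum[of U "\<lambda>k. t ^ k"] assms by (simp add: add.commute)
    also have "(\<Sum>k\<in>U. t ^ k) \<le> (\<Sum>k. t ^ k)"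
      using \<open>finite U\<close> assms by (intro sum_le_suminf) (auto intro: summable_geometric)
    finally show "sum (\<lambda>l. t ^ sum_list l) F \<le> exp (\<Sum>k. t ^ k)" by simp
  qed
qed

lemma summable_on_power_sum_list:
  fixes t :: real
  assumes "A \<subseteq> {l. sorted_wrt (<) l}" "0 \<le> t" "t < 1"
  shows "(\<lambda>l. t ^ sum_list l) summable_on A"
  by (rule summable_on_subset_banach[OF summable_on_strict_sorted[OF assms(2,3)] assms(1)])

lemma weight_summable_on:
  assumes "A \<subseteq> {l. sorted_wrt (<) l}" "norm q < 1" "norm x \<le> 1"
  shows "weight x q summable_on A"
proof -
  have "(\<lambda>l. norm (weight x q l)) summable_on A"
  proof (rule summable_on_comparison_test)
    show "(\<lambda>l. norm q ^ sum_list l) summable_on A"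
      using summable_on_power_sum_list[OF assms(1)] assms(2) by simp
    show "norm (weight x q l) \<le> norm q ^ sum_list l" for l
      using norm_weight_le assms(3) .
  qed simp
  then show ?thesis
    using summable_on_iff_abs_summable_on_complex by blast
qed

lemma inj_map_add: "inj (map (\<lambda>p::nat. p + c))"
  by (rule inj_mapI) (simp add: inj_def)

lemma has_sum_weight_map_add:
  assumes "(weight (x * q ^ c) q has_sum s) A"
  shows "(weight x q has_sum s) (map (\<lambda>p. p + c) ` A)"
  using assms inj_on_subset[OF inj_map_add subset_UNIV]
  by (simp add: has_sum_reindex o_def weight_map_add)

lemma has_sum_weight_Cons_map_add:
  assumes "(weight (x * q ^ e) q has_sum s) A"
  shows "(weight x q has_sum (x * q ^ c * s)) ((\<lambda>l. c # map (\<lambda>p. p + e) l) ` A)"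
proof -
  have "inj_on (\<lambda>l. c # map (\<lambda>p. p + e) l) A"
    by (rule inj_onI) (simp add: inj_eq[OF inj_map_add])
  moreover have "((\<lambda>l. weight x q (c # map (\<lambda>p. p + e) l)) has_sum (x * q ^ c * s)) A"
    using has_sum_cmult_right[OF assms] by (simp add: weight_Cons weight_map_add)
  ultimately show ?thesis by (simp add: has_sum_reindex o_def)
qed

lemma infsum_weight_0:
  assumes "[] \<in> A" shows "infsum (weight 0 q) A = 1"
proof -
  have "infsum (weight 0 q) A = infsum (weight 0 q) {[]}"
    using assms by (intro infsum_cong_neutral) (auto simp: weight_def)
  then show ?thesis by simp
qed

lemma isCont_infsum_weight:
  assumes A: "A \<subseteq> {l. sorted_wrt (<) l}" and q: "norm q < 1"
  shows "isCont (\<lambda>y. infsum (weight y q) A) 0"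
proof -
  define F where "F y = infsum (weight y q) A" for y
  define K where "K = infsum (\<lambda>l. norm q ^ sum_list l) A"
  have bound: "norm (F y - F 0) \<le> norm y * K" if y: "norm y \<le> 1" for y
  proof (rule norm_infsum_le)
    have "(weight 0 q has_sum F 0) A"
      unfolding F_def using weight_summable_on[OF A q] by simp
    then have "((\<lambda>l. - weight 0 q l) has_sum - F 0) A"
      by (simp add: has_sum_uminus)
    from has_sum_add[OF _ this]
    show "((\<lambda>l. weight y q l - weight 0 q l) has_sum (F y - F 0)) A"
      unfolding F_def using weight_summable_on[OF A q y] by simp
    show "((\<lambda>l. norm y * norm q ^ sum_list l) has_sum (norm y * K)) A"
      unfolding K_def using summable_on_power_sum_list[OF A, of "norm q"] q
      by (intro has_sum_cmult_right has_sum_infsum) auto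
    show "norm (weight y q l - weight 0 q l) \<le> norm y * norm q ^ sum_list l" for l
    proof (cases l)
      case (Cons p l')
      have "norm (weight y q l) = norm y * (norm y ^ length l' * norm q ^ sum_list l)"
        using Cons by (simp add: weight_def norm_mult norm_power)
      also have "\<dots> \<le> norm y * norm q ^ sum_list l"
        using y by (intro mult_left_mono mult_left_le_one_le) (auto simp: power_le_one)
      finally show ?thesis using Cons by (simp add: weight_def)
    qed simp
  qed
  have "eventually (\<lambda>y. y \<in> ball 0 1 \<and> y \<in> UNIV) (at (0::complex))"
    by (rule eventually_at_ball) simp
  then have "eventually (\<lambda>y. norm (F y - F 0) \<le> norm y * K) (at 0)"
    by eventually_elim (rule bound, simp)
  moreover have "((\<lambda>y::complex. norm y * K) \<longlongrightarrow> norm (0::complex) * K) (at 0)"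
    by (intro tendsto_intros)
  then have "((\<lambda>y::complex. norm y * K) \<longlongrightarrow> 0) (at 0)"
    by simp
  ultimately have "((\<lambda>y. F y - F 0) \<longlongrightarrow> 0) (at 0)"
    by (rule Lim_null_comparison)
  then show ?thesis
    unfolding isCont_def F_def[symmetric] by (rule LIM_zero_cancel)
qed

lemma norm_mult_le_norm: "norm (Q :: 'a :: real_normed_div_algebra) \<le> 1 \<Longrightarrow> norm (y * Q) \<le> norm y"
  by (simp add: norm_mult mult_left_le)

section \<open>The q-difference equation of the generating function\<close>

definition drr_gf :: "nat \<Rightarrow> nat \<Rightarrow> complex \<Rightarrow> complex \<Rightarrow> complex" where
  "drr_gf d r q x = infsum (weight x q) (drr_lists d r)"

lemma norm_mult_power_le_1:
  fixes q x :: complex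
  shows "norm q < 1 \<Longrightarrow> norm x \<le> 1 \<Longrightarrow> norm (x * q ^ c) \<le> 1"
  using norm_mult_le_norm[of "q ^ c" x] by (simp add: norm_power power_le_one)

context drr_params
begin

lemma has_sum_drr_gf:
  assumes "norm q < 1" "norm x \<le> 1"
  shows "(weight x q has_sum drr_gf d r q x) L"
proof -
  have "0 < d" using r_small by simp
  then show ?thesis
    unfolding drr_gf_def using weight_summable_on[OF drr_lists_subset_strict_sorted assms] by simp
qed

lemma has_sum_weight_above_d:
  assumes "norm q < 1" "norm x \<le> 1"
  shows "(weight x q has_sum (drr_gf d r q (x * q ^ d) - 1)) {m \<in> L. m \<noteq> [] \<and> (\<forall>p\<in>set m. d < p)}"
proof -
  have "[] \<in> L" by (simp add: drr_lists_def)
  moreover have "norm (x * q ^ d) \<le> 1" using assms by (rule norm_mult_power_le_1)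
  ultimately have "(weight (x * q ^ d) q has_sum (drr_gf d r q (x * q ^ d) - 1)) (L - {[]})"
    using has_sum_Diff[OF has_sum_drr_gf[OF assms(1)] has_sum_finite[of "{[]}"]] by simp
  then show ?thesis
    unfolding drr_lists_above_d_eq_image by (rule has_sum_weight_map_add)
qed

lemma has_sum_weight_hd_r:
  assumes "norm q < 1" "norm x \<le> 1"
  shows "(weight x q has_sum (x * q ^ r * drr_gf d r q (x * q ^ d))) {m \<in> L. m \<noteq> [] \<and> hd m = r}"
  unfolding drr_lists_hd_r_eq_image
  by (intro has_sum_weight_Cons_map_add has_sum_drr_gf norm_mult_power_le_1 assms)

lemma has_sum_weight_hd_d_minus_r:
  assumes "norm q < 1" "norm x \<le> 1"
  shows "(weight x q has_sum (x * q ^ (d - r) *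
      (drr_gf d r q (x * q ^ d) - x * q ^ d * q ^ r * drr_gf d r q (x * q ^ d * q ^ d))))
    {m \<in> L. m \<noteq> [] \<and> hd m = d - r}"
proof -
  have "{l \<in> L. r \<notin> set l} = L - {m \<in> L. m \<noteq> [] \<and> hd m = r}"
    using r_in_set_drr_lists_iff by auto
  moreover have "(weight (x * q ^ d) q has_sum
      (drr_gf d r q (x * q ^ d) - x * q ^ d * q ^ r * drr_gf d r q (x * q ^ d * q ^ d)))
      (L - {m \<in> L. m \<noteq> [] \<and> hd m = r})"
    using norm_mult_power_le_1 assms
    by (intro has_sum_Diff has_sum_drr_gf has_sum_weight_hd_r) auto
  ultimately show ?thesis
    unfolding drr_lists_hd_d_minus_r_eq_image by (intro has_sum_weight_Cons_map_add) simp
qed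

lemma has_sum_weight_hd_d:
  assumes "norm q < 1" "norm x \<le> 1"
  shows "(weight x q has_sum (x * q ^ d * drr_gf d r q (x * q ^ d * q ^ d))) {m \<in> L. m \<noteq> [] \<and> hd m = d}"
proof -
  have "norm (x * q ^ d * q ^ d) \<le> 1"
    by (intro norm_mult_power_le_1 assms)
  moreover have "q ^ (d * 2) = q ^ d * q ^ d"
    by (simp add: power_mult power2_eq_square)
  ultimately have "(weight (x * q ^ (d * 2)) q has_sum drr_gf d r q (x * q ^ d * q ^ d)) L"
    using has_sum_drr_gf[OF assms(1)] by (simp add: mult.assoc)
  then show ?thesis
    unfolding drr_lists_hd_d_eq_image by (rule has_sum_weight_Cons_map_add)
qed

lemma drr_gf_functional_equation:
  assumes q: "norm q < 1" and x: "norm x \<le> 1"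
  shows "drr_gf d r q x = (1 + x * q ^ r + x * q ^ (d - r)) * drr_gf d r q (x * q ^ d)
      + x * q ^ d * (1 - x * q ^ d) * drr_gf d r q (x * q ^ d * q ^ d)"
proof -
  define F where "F = drr_gf d r q"
  define y where "y = x * q ^ d"
  have hd_above: "d < hd m" if "m \<noteq> []" "\<forall>p\<in>set m. d < p" for m :: "nat list"
    using that hd_in_set[of m] by blast
  have dr: "r < d - r" "d - r < d" using r_pos r_small by auto
  have "(weight x q has_sum (1 + (F y - 1) + x * q ^ r * F y
      + x * q ^ (d - r) * (F y - y * q ^ r * F (y * q ^ d)) + x * q ^ d * F (y * q ^ d)))
      ({[]} \<union> {m \<in> L. m \<noteq> [] \<and> (\<forall>p\<in>set m. d < p)} \<union> {m \<in> L. m \<noteq> [] \<and> hd m = r}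
        \<union> {m \<in> L. m \<noteq> [] \<and> hd m = d - r} \<union> {m \<in> L. m \<noteq> [] \<and> hd m = d})"
    unfolding F_def y_def
    by (intro has_sum_Un_disjoint has_sum_weight_above_d has_sum_weight_hd_r
        has_sum_weight_hd_d_minus_r has_sum_weight_hd_d q x) (use hd_above dr in \<open>fastforce simp: has_sum_finite_iff\<close>)+
  from this[folded drr_lists_split] have "F x = 1 + (F y - 1) + x * q ^ r * F y
      + x * q ^ (d - r) * (F y - y * q ^ r * F (y * q ^ d)) + x * q ^ d * F (y * q ^ d)"
    unfolding F_def by (rule has_sum_unique[OF has_sum_drr_gf[OF q x]])
  moreover have q_d: "q ^ d = q ^ r * q ^ (d - r)"
    using r_small by (simp flip: power_add)
  ultimately show ?thesis
    unfolding F_def[symmetric] y_def q_d by (simp add: algebra_simps)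
qed

end

section \<open>The product side\<close>

lemma qpoch_Suc: "qpoch a Q (Suc n) = qpoch a Q n * (1 - a * Q ^ n)"
  by (simp add: qpoch_def)

lemma one_minus_power_Suc_nonzero:
  fixes Q :: complex assumes "norm Q < 1" shows "1 - Q * Q ^ n \<noteq> 0"
proof -
  have "norm Q ^ Suc n \<le> norm Q ^ 1"
    using assms by (intro power_decreasing) auto
  then have "norm (Q * Q ^ n) < 1" using assms by (simp add: norm_mult norm_power)
  then show ?thesis by auto
qed

lemma qpoch_self_nonzero: "norm Q < 1 \<Longrightarrow> qpoch Q Q n \<noteq> 0"
  using one_minus_power_Suc_nonzero by (auto simp: qpoch_def)

definition phi_coeff :: "complex \<Rightarrow> complex \<Rightarrow> complex \<Rightarrow> nat \<Rightarrow> complex" where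
  "phi_coeff a b Q n = qpoch a Q n * qpoch b Q n / qpoch Q Q n"

definition phi :: "complex \<Rightarrow> complex \<Rightarrow> complex \<Rightarrow> complex \<Rightarrow> complex" where
  "phi a b Q x = (\<Sum>n. phi_coeff a b Q n * x ^ n)"

lemma phi_coeff_Suc:
  assumes "norm Q < 1"
  shows "phi_coeff a b Q (Suc n) * (1 - Q * Q ^ n) = phi_coeff a b Q n * (1 - a * Q ^ n) * (1 - b * Q ^ n)"
  using qpoch_self_nonzero[OF assms, of n] one_minus_power_Suc_nonzero[OF assms, of n]
  by (simp add: phi_coeff_def qpoch_Suc field_simps)

lemma summable_phi:
  assumes Q: "norm Q < 1" and x: "norm x < 1"
  shows "summable (\<lambda>n. phi_coeff a b Q n * x ^ n)"
proof -
  define t where "t n = phi_coeff a b Q n * x ^ n" for n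
  define \<rho> where "\<rho> n = norm x * norm (1 - a * Q ^ n) * norm (1 - b * Q ^ n) / norm (1 - Q * Q ^ n)" for n
  have t_Suc: "norm (t (Suc n)) = \<rho> n * norm (t n)" for n
  proof -
    have "phi_coeff a b Q (Suc n) = phi_coeff a b Q n * (1 - a * Q ^ n) * (1 - b * Q ^ n) / (1 - Q * Q ^ n)"
      using phi_coeff_Suc[OF Q, of a b n] one_minus_power_Suc_nonzero[OF Q, of n] by (simp add: field_simps)
    then show ?thesis by (simp add: t_def \<rho>_def norm_mult norm_divide norm_power)
  qed
  have "\<rho> \<longlonglongrightarrow> norm x * norm (1 - a * 0) * norm (1 - b * 0) / norm (1 - Q * 0)"
    unfolding \<rho>_def by (intro tendsto_intros Q) simp
  then have "eventually (\<lambda>n. \<rho> n < (1 + norm x) / 2) sequentially"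
    using x by (intro order_tendstoD(2)) auto
  then obtain N where N: "\<And>n. n \<ge> N \<Longrightarrow> \<rho> n < (1 + norm x) / 2"
    unfolding eventually_sequentially by blast
  have "summable t"
  proof (rule summable_ratio_test[of "(1 + norm x) / 2" N])
    show "(1 + norm x) / 2 < 1" using x by simp
    show "norm (t (Suc n)) \<le> (1 + norm x) / 2 * norm (t n)" if "n \<ge> N" for n
      unfolding t_Suc using N[OF that] by (intro mult_right_mono) auto
  qed
  then show ?thesis unfolding t_def .
qed

lemma phi_0 [simp]: "phi a b Q 0 = 1"
  unfolding phi_def powser_zero by (simp add: phi_coeff_def qpoch_def)

lemma isCont_phi_0: "norm Q < 1 \<Longrightarrow> isCont (phi a b Q) 0"
  unfolding phi_def[abs_def] by (rule isCont_powser[OF summable_phi[of Q "1/2"]]) auto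

lemma phi_functional_equation:
  assumes Q: "norm Q < 1" and x: "norm x < 1"
  shows "(1 - x) * phi a b Q x = (1 - (a + b) * x) * phi a b Q (x * Q) + a * b * x * phi a b Q (x * Q * Q)"
proof -
  let ?c = "phi_coeff a b Q"
  let ?S = "x * (phi a b Q x - (a + b) * phi a b Q (x * Q) + a * b * phi a b Q (x * Q * Q))"
  have sums_phi: "(\<lambda>n. ?c n * y ^ n) sums phi a b Q y" if "norm y < 1" for y
    unfolding phi_def using summable_phi[OF Q that] by (rule summable_sums)
  have "norm (x * Q) < 1" "norm (x * Q * Q) < 1"
    using x Q norm_mult_le_norm[of Q x] norm_mult_le_norm[of Q "x * Q"] by auto
  note s = sums_phi[OF x] sums_phi[OF this(1)] sums_phi[OF this(2)]
  define u where "u n = ?c n * x ^ n - ?c n * (x * Q) ^ n" for n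
  have "u sums (phi a b Q x - phi a b Q (x * Q))"
    unfolding u_def by (rule sums_diff[OF s(1,2)])
  moreover have "u sums ?S"
  proof -
    have u_Suc: "u (Suc n) = x * (?c n * x ^ n - (a + b) * (?c n * (x * Q) ^ n) + a * b * (?c n * (x * Q * Q) ^ n))" for n
    proof -
      have "u (Suc n) = x ^ Suc n * (?c (Suc n) * (1 - Q * Q ^ n))"
        unfolding u_def by (simp add: power_mult_distrib algebra_simps)
      also have "\<dots> = x ^ Suc n * ?c n * (1 - a * Q ^ n) * (1 - b * Q ^ n)"
        using phi_coeff_Suc[OF Q, of a b n] by (simp add: mult.assoc)
      finally show ?thesis by (simp add: power_mult_distrib algebra_simps)
    qed
    have "(\<lambda>n. u (Suc n)) sums ?S"
      unfolding u_Suc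
      by (intro sums_mult[of _ _ x] sums_add[OF sums_diff[OF s(1) sums_mult[OF s(2)]] sums_mult[OF s(3)]])
    then have "u sums (?S + u 0)"
      by (simp only: sums_Suc_iff)
    moreover have "u 0 = 0" by (simp add: u_def)
    ultimately show ?thesis by simp
  qed
  ultimately have "phi a b Q x - phi a b Q (x * Q) = ?S"
    by (rule sums_unique2)
  then show ?thesis by (simp add: algebra_simps)
qed

lemma convergent_prod_qpoch:
  fixes Q :: complex assumes "norm Q < 1" shows "convergent_prod (\<lambda>j. 1 - y * Q ^ j)"
proof (intro abs_convergent_prod_imp_convergent_prod summable_imp_abs_convergent_prod)
  have "summable (\<lambda>j. norm y * norm Q ^ j)"
    using assms by (intro summable_mult summable_geometric) simp
  then show "summable (\<lambda>j. norm (1 - y * Q ^ j - 1))" by (simp add: norm_mult norm_power)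
qed

lemma qpoch_inf_shift: "norm Q < 1 \<Longrightarrow> qpoch_inf y Q = (1 - y) * qpoch_inf (y * Q) Q"
proof -
  assume Q: "norm Q < 1"
  have "(\<lambda>j. 1 - y * Q ^ j) has_prod ((\<Prod>k<1. 1 - y * Q ^ k) * (\<Prod>k. 1 - y * Q ^ (k + 1)))"
    by (rule has_prod_ignore_initial_segment'[OF convergent_prod_qpoch[OF Q]])
  then have "qpoch_inf y Q = (\<Prod>k<1. 1 - y * Q ^ k) * (\<Prod>k. 1 - y * Q ^ (k + 1))"
    unfolding qpoch_inf_def by (rule has_prod_unique[symmetric])
  also have "(\<Prod>k. 1 - y * Q ^ (k + 1)) = qpoch_inf (y * Q) Q"
    unfolding qpoch_inf_def by (rule prodinf_cong) (simp add: mult_ac)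
  finally show ?thesis by simp
qed

lemma norm_qpoch_inf_minus_1_le:
  assumes Q: "norm Q < 1"
  shows "norm (qpoch_inf y Q - 1) \<le> exp (norm y / (1 - norm Q)) - 1"
proof -
  have lim: "(\<lambda>n. \<Prod>i\<le>n. 1 - y * Q ^ i) \<longlonglongrightarrow> qpoch_inf y Q"
    unfolding qpoch_inf_def by (rule convergent_prod_LIMSEQ[OF convergent_prod_qpoch[OF Q]])
  have "norm ((\<Prod>i\<le>n. 1 - y * Q ^ i) - 1) \<le> exp (norm y / (1 - norm Q)) - 1" for n
  proof -
    have "norm ((\<Prod>i\<le>n. 1 + (- y * Q ^ i)) - 1) \<le> (\<Prod>i\<le>n. 1 + norm (- y * Q ^ i)) - 1"
      by (rule norm_prod_minus1_le_prod_minus1)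
    also have "(\<Prod>i\<le>n. 1 + norm (- y * Q ^ i)) \<le> exp (\<Sum>i\<le>n. norm y * norm Q ^ i)"
      using prod_le_exp_sum[of "{..n}" "\<lambda>i. norm (- y * Q ^ i)"] by (simp add: norm_mult norm_power)
    also have "(\<Sum>i\<le>n. norm y * norm Q ^ i) \<le> (\<Sum>i. norm y * norm Q ^ i)"
      using Q by (intro sum_le_suminf summable_mult summable_geometric) auto
    also have "(\<Sum>i. norm y * norm Q ^ i) = norm y / (1 - norm Q)"
      using suminf_mult[OF summable_geometric[of "norm Q"]] suminf_geometric[of "norm Q"] Q by simp
    finally show ?thesis by simp
  qed
  then show ?thesis
    by (intro LIMSEQ_le_const2[OF tendsto_norm[OF tendsto_diff[OF lim tendsto_const]]]) auto
qed

lemma qpoch_inf_0 [simp]: "qpoch_inf 0 Q = 1"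
  by (simp add: qpoch_inf_def)

lemma isCont_qpoch_inf_0:
  assumes Q: "norm Q < 1" shows "isCont (\<lambda>y. qpoch_inf y Q) 0"
proof -
  have "((\<lambda>y::complex. exp (norm y / (1 - norm Q)) - 1) \<longlongrightarrow> exp (norm (0::complex) / (1 - norm Q)) - 1) (at 0)"
    by (intro tendsto_intros) (use Q in auto)
  then have "((\<lambda>y::complex. exp (norm y / (1 - norm Q)) - 1) \<longlongrightarrow> 0) (at 0)"
    by simp
  moreover have "eventually (\<lambda>y. norm (qpoch_inf y Q - 1) \<le> exp (norm y / (1 - norm Q)) - 1) (at 0)"
    by (intro always_eventually allI norm_qpoch_inf_minus_1_le[OF Q])
  ultimately have "((\<lambda>y. qpoch_inf y Q - 1) \<longlongrightarrow> 0) (at 0)"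
    by (rule Lim_null_comparison[rotated])
  then show ?thesis
    unfolding isCont_def by (simp add: LIM_zero_cancel)
qed

lemma qpoch_inf_phi_functional_equation:
  fixes a b Q x :: complex
  assumes Q: "norm Q < 1" and x: "norm x < 1"
  defines "H \<equiv> \<lambda>y. qpoch_inf y Q * phi a b Q y"
  shows "H x = (1 - (a + b) * x) * H (x * Q) + a * b * x * (1 - x * Q) * H (x * Q * Q)"
proof -
  have shift: "qpoch_inf y Q = (1 - y) * qpoch_inf (y * Q) Q" for y
    by (rule qpoch_inf_shift[OF Q])
  have "H x = ((1 - x) * phi a b Q x) * qpoch_inf (x * Q) Q"
    unfolding H_def shift[of x] by (simp only: mult_ac)
  also have "\<dots> = ((1 - (a + b) * x) * phi a b Q (x * Q) + a * b * x * phi a b Q (x * Q * Q)) * qpoch_inf (x * Q) Q"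
    by (simp only: phi_functional_equation[OF Q x])
  also have "\<dots> = (1 - (a + b) * x) * H (x * Q) + a * b * x * (1 - x * Q) * H (x * Q * Q)"
    unfolding H_def shift[of "x * Q"] by (simp add: algebra_simps)
  finally show ?thesis .
qed

section \<open>Uniqueness for q-difference equations\<close>

lemma exp_mult_add_one_le:
  fixes C t s :: real
  assumes "s < 1"
  shows "(1 + C * t) * exp (C * (t * s) / (1 - s)) \<le> exp (C * t / (1 - s))"
proof -
  have "(1 + C * t) * exp (C * (t * s) / (1 - s)) \<le> exp (C * t) * exp (C * (t * s) / (1 - s))"
    by (intro mult_right_mono exp_ge_add_one_self) simp
  also have "\<dots> = exp (C * t + C * (t * s) / (1 - s))"
    by (simp add: exp_add)
  also have "C * t + C * (t * s) / (1 - s) = C * t / (1 - s)"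
    using assms by (simp add: field_simps)
  finally show ?thesis .
qed

lemma q_functional_equation_step:
  fixes D \<alpha> \<beta> :: "'a::real_normed_field \<Rightarrow> 'a" and Q y :: 'a and C M :: real
  assumes eq: "D y = \<alpha> y * D (y * Q) + \<beta> y * D (y * Q * Q)"
    and coeff: "norm (\<alpha> y) + norm (\<beta> y) \<le> 1 + C * norm y"
    and "norm (D (y * Q)) \<le> M" "norm (D (y * Q * Q)) \<le> M"
  shows "norm (D y) \<le> (1 + C * norm y) * M"
proof -
  have "0 \<le> M" using assms(3) norm_ge_zero order_trans by blast
  have "norm (D y) \<le> norm (\<alpha> y) * norm (D (y * Q)) + norm (\<beta> y) * norm (D (y * Q * Q))"
    using eq norm_triangle_ineq[of "\<alpha> y * D (y * Q)" "\<beta> y * D (y * Q * Q)"] by (simp add: norm_mult)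
  also have "\<dots> \<le> (norm (\<alpha> y) + norm (\<beta> y)) * M"
    unfolding distrib_right using assms(3,4) by (intro add_mono mult_left_mono) auto
  also have "\<dots> \<le> (1 + C * norm y) * M"
    using coeff \<open>0 \<le> M\<close> by (rule mult_right_mono)
  finally show ?thesis .
qed

lemma q_functional_equation_bound:
  fixes D \<alpha> \<beta> :: "'a::real_normed_field \<Rightarrow> 'a" and Q y :: 'a and C \<epsilon> \<delta> :: real
  assumes Q: "norm Q < 1" and C: "0 \<le> C" and \<epsilon>: "0 \<le> \<epsilon>"
    and small: "\<And>z. norm z < \<delta> \<Longrightarrow> norm (D z) \<le> \<epsilon>"
    and eq: "\<And>y. norm y < 1 \<Longrightarrow> D y = \<alpha> y * D (y * Q) + \<beta> y * D (y * Q * Q)"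
    and coeff: "\<And>y. norm y < 1 \<Longrightarrow> norm (\<alpha> y) + norm (\<beta> y) \<le> 1 + C * norm y"
  shows "norm y < 1 \<Longrightarrow> norm y * norm Q ^ N < \<delta> \<Longrightarrow> norm (D y) \<le> exp (C * norm y / (1 - norm Q)) * \<epsilon>"
proof (induction N arbitrary: y)
  case 0
  then have "norm (D y) \<le> \<epsilon>" using small by simp
  also have "\<epsilon> \<le> exp (C * norm y / (1 - norm Q)) * \<epsilon>"
    using C Q \<epsilon> by (simp add: mult_le_cancel_right1)
  finally show ?case .
next
  case (Suc N)
  let ?M = "exp (C * (norm y * norm Q) / (1 - norm Q)) * \<epsilon>"
  have yQ: "norm (y * Q) \<le> norm y" "norm (y * Q * Q) \<le> norm (y * Q)"
    using norm_mult_le_norm[of Q] Q by auto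
  have "norm (y * Q) * norm Q ^ N < \<delta>"
    using Suc.prems(2) by (simp add: norm_mult mult_ac)
  moreover have "norm (y * Q * Q) * norm Q ^ N \<le> norm (y * Q) * norm Q ^ N"
    using yQ by (intro mult_right_mono) auto
  ultimately have IH: "norm (D (y * Q)) \<le> exp (C * norm (y * Q) / (1 - norm Q)) * \<epsilon>"
    "norm (D (y * Q * Q)) \<le> exp (C * norm (y * Q * Q) / (1 - norm Q)) * \<epsilon>"
    using Suc.IH Suc.prems(1) yQ by simp_all
  have "exp (C * norm (y * Q * Q) / (1 - norm Q)) * \<epsilon> \<le> exp (C * norm (y * Q) / (1 - norm Q)) * \<epsilon>"
    using yQ(2) C Q \<epsilon> by (auto intro!: mult_right_mono divide_right_mono mult_left_mono)
  with IH have "norm (D (y * Q)) \<le> ?M" "norm (D (y * Q * Q)) \<le> ?M"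
    by (simp_all add: norm_mult)
  then have "norm (D y) \<le> (1 + C * norm y) * ?M"
    by (rule q_functional_equation_step[where D = D and \<alpha> = \<alpha> and \<beta> = \<beta>,
          OF eq[OF Suc.prems(1)] coeff[OF Suc.prems(1)]])
  also have "\<dots> \<le> exp (C * norm y / (1 - norm Q)) * \<epsilon>"
    using mult_right_mono[OF exp_mult_add_one_le[of "norm Q" C "norm y"] \<epsilon>] Q by (simp add: mult.assoc)
  finally show ?case .
qed

lemma q_functional_equation_vanishes:
  fixes D \<alpha> \<beta> :: "'a::real_normed_field \<Rightarrow> 'a" and Q x :: 'a and C :: real
  assumes Q: "norm Q < 1" and C: "0 \<le> C" and cont: "isCont D 0" and D0: "D 0 = 0"
    and eq: "\<And>y. norm y < 1 \<Longrightarrow> D y = \<alpha> y * D (y * Q) + \<beta> y * D (y * Q * Q)"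
    and coeff: "\<And>y. norm y < 1 \<Longrightarrow> norm (\<alpha> y) + norm (\<beta> y) \<le> 1 + C * norm y"
    and x: "norm x < 1"
  shows "D x = 0"
proof -
  define E where "E = exp (C * norm x / (1 - norm Q))"
  have "norm (D x) \<le> 0 + e" if "0 < e" for e
  proof -
    have "0 < e / E" using that by (simp add: E_def)
    then obtain \<delta> where "0 < \<delta>" and \<delta>: "\<forall>z. z \<noteq> 0 \<and> norm (z - 0) < \<delta> \<longrightarrow> norm (D z - D 0) < e / E"
      using LIM_D[OF cont[unfolded isCont_def]] by blast
    have small: "norm (D z) \<le> e / E" if "norm z < \<delta>" for z
      using \<delta> that D0 \<open>0 < e / E\<close> by (cases "z = 0") auto
    have "(\<lambda>N. norm x * norm Q ^ N) \<longlonglongrightarrow> 0"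
      using Q by (intro tendsto_mult_right_zero LIMSEQ_power_zero) simp
    then have "eventually (\<lambda>N. norm x * norm Q ^ N < \<delta>) sequentially"
      using \<open>0 < \<delta>\<close> by (rule order_tendstoD(2))
    then obtain N where N: "norm x * norm Q ^ N < \<delta>"
      by (auto simp: eventually_sequentially)
    have "norm (D x) \<le> exp (C * norm x / (1 - norm Q)) * (e / E)"
      by (rule q_functional_equation_bound[OF Q C less_imp_le[OF \<open>0 < e / E\<close>] small eq coeff x N])
    then show ?thesis by (simp add: E_def)
  qed
  then have "norm (D x) \<le> 0"
    by (rule field_le_epsilon)
  then show ?thesis by simp
qed

lemma norm_q_difference_coeffs_le:
  fixes c Q y :: "'a::real_normed_field"
  assumes Q: "norm Q \<le> 1" and y: "norm y \<le> 1"
  shows "norm (1 - c * y) + norm (Q * y * (1 - y * Q)) \<le> 1 + (norm c + 2) * norm y"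
proof -
  have "norm (1 - y * Q) \<le> 2"
    using norm_triangle_ineq4[of 1 "y * Q"] norm_mult_le_norm[OF Q, of y] y by simp
  then have "norm Q * norm (1 - y * Q) \<le> 1 * 2"
    using Q by (intro mult_mono) auto
  then have "norm y * (norm Q * norm (1 - y * Q)) \<le> norm y * 2"
    by (intro mult_left_mono) auto
  then have "norm (Q * y * (1 - y * Q)) \<le> 2 * norm y"
    by (simp add: norm_mult mult_ac)
  moreover have "norm (1 - c * y) \<le> 1 + norm c * norm y"
    using norm_triangle_ineq4[of 1 "c * y"] by (simp add: norm_mult)
  ultimately show ?thesis
    by (simp add: distrib_right)
qed

context drr_params
begin

theorem has_sum_weight_drr_lists:
  fixes q x :: complex
  assumes q: "norm q < 1" and x: "norm x < 1"
  shows "(weight x q has_sum (qpoch_inf x (q ^ d) * phi (- (q ^ r)) (- (q ^ (d - r))) (q ^ d) x)) L"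
proof -
  define Q a b where "Q = q ^ d" and "a = - (q ^ r)" and "b = - (q ^ (d - r))"
  define F where "F = drr_gf d r q"
  define H where "H y = qpoch_inf y Q * phi a b Q y" for y
  have "0 < d" using r_small by simp
  have L: "L \<subseteq> {l. sorted_wrt (<) l}"
    by (rule drr_lists_subset_strict_sorted[OF \<open>0 < d\<close>])
  have Q: "norm Q < 1"
    using q \<open>0 < d\<close> by (simp add: Q_def norm_power power_less_one_iff)
  have ab: "a * b = Q"
    using r_small by (simp add: a_def b_def Q_def flip: power_add)
  have F_eq: "F y = (1 - (a + b) * y) * F (y * Q) + a * b * y * (1 - y * Q) * F (y * Q * Q)"
    if "norm y < 1" for y
  proof -
    have "F y = (1 + y * q ^ r + y * q ^ (d - r)) * F (y * q ^ d)
        + y * q ^ d * (1 - y * q ^ d) * F (y * q ^ d * q ^ d)"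
      unfolding F_def using that by (intro drr_gf_functional_equation[OF q]) simp
    then show ?thesis
      unfolding ab by (simp add: a_def b_def Q_def algebra_simps)
  qed
  have H_eq: "H y = (1 - (a + b) * y) * H (y * Q) + a * b * y * (1 - y * Q) * H (y * Q * Q)"
    if "norm y < 1" for y
    unfolding H_def by (rule qpoch_inf_phi_functional_equation[OF Q that])
  have "F x - H x = 0"
  proof (rule q_functional_equation_vanishes[where D = "\<lambda>y. F y - H y" and x = x
        and \<alpha> = "\<lambda>y. 1 - (a + b) * y" and \<beta> = "\<lambda>y. a * b * y * (1 - y * Q)" and C = "norm (a + b) + 2"])
    show "isCont (\<lambda>y. F y - H y) 0"
      unfolding F_def H_def drr_gf_def[abs_def]
      by (intro isCont_diff isCont_mult isCont_infsum_weight isCont_qpoch_inf_0 isCont_phi_0 L q Q)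
    show "F 0 - H 0 = 0"
      by (simp add: F_def H_def drr_gf_def infsum_weight_0 drr_lists_def)
    fix y :: complex assume y: "norm y < 1"
    show "F y - H y = (1 - (a + b) * y) * (F (y * Q) - H (y * Q))
        + a * b * y * (1 - y * Q) * (F (y * Q * Q) - H (y * Q * Q))"
      unfolding F_eq[OF y] H_eq[OF y] by (simp add: algebra_simps)
    show "norm (1 - (a + b) * y) + norm (a * b * y * (1 - y * Q)) \<le> 1 + (norm (a + b) + 2) * norm y"
      unfolding ab using Q y by (intro norm_q_difference_coeffs_le) auto
  qed (use Q x in auto)
  moreover have "(weight x q has_sum F x) L"
    unfolding F_def using x by (intro has_sum_drr_gf q) simp
  ultimately show ?thesis
    by (simp add: H_def Q_def a_def b_def)
qed

end

theorem proposition2p2: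
  fixes d r :: nat and x q :: complex
  assumes "d \<ge> 3" and "1 \<le> r" and "2 * r < d"
    and "norm q < 1" and "norm x < 1"
  shows "((\<lambda>l. x ^ length l * q ^ sum_list l) has_sum
           (qpoch_inf x (q ^ d) *
            (\<Sum>n. x ^ n * qpoch (- (q ^ r)) (q ^ d) n * qpoch (- (q ^ (d - r))) (q ^ d) n
                   / qpoch (q ^ d) (q ^ d) n)))
         (drr_partitions d r)"
proof -
  interpret drr_params d r
    using assms by unfold_locales
  have "inj_on rev (drr_lists d r)"
    by (simp add: inj_on_def)
  moreover have "(\<lambda>l. x ^ length l * q ^ sum_list l) \<circ> rev = weight x q"
    by (auto simp: weight_def sum_list_rev)
  moreover have "phi (- (q ^ r)) (- (q ^ (d - r))) (q ^ d) x =
      (\<Sum>n. x ^ n * qpoch (- (q ^ r)) (q ^ d) n * qpoch (- (q ^ (d - r))) (q ^ d) n / qpoch (q ^ d) (q ^ d) n)"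
    by (simp add: phi_def phi_coeff_def mult_ac)
  ultimately show ?thesis
    using has_sum_weight_drr_lists[OF assms(4,5)] drr_partitions_eq_rev[of d r] assms(3)
    by (simp add: has_sum_reindex)
qed

end
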